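(* Let $(\Omega,\mathcal F,\mathbb P)$ be nonatomic, $X$ a bounded random vector in $\mathbb R^N$ with $\mathbb E(X)=0$, $Y$ a bounded random vector in $\mathbb R^d$, $\nu=\mathrm{Law}(X,Y)$, $m=\mathrm{Law}(X)$, $\mu$ the uniform measure on $[0,1]^d$. Consider the primal problem $$(P)\qquad \max\{\mathbb E(V\cdot Y):\ \mathrm{Law}(V)=\mu,\ \mathbb E(X\mid V)=0\}$$ and the dual problem $$(D)\qquad \inf\Big\{\mathbb E(\psi(X,Y))+\int_{[0,1]^d}\varphi\,d\mu\ :\ \psi(x,y)+\varphi(t)+b(t)\cdot x\ge t\cdot y\ \ \forall (x,y)\in\mathrm{spt}(\nu),\ t\in[0,1]^d\Big\},$$ and assume the optimal values of $(P)$ and $(D)$ coincide. Let $U$ solve $(P)$ and let $(\psi,\varphi,b)$ (with $\psi$ $\nu$-integrable, $\varphi$ $\mu$-integrable, $b$ $\mu$-integrable, all defined everywhere and satisfying the constraint of $(D)$ everywhere) solve $(D)$. For $(t,x)\in[0,1]^d\times\mathrm{spt}(m)$ set $\Phi_x(t):=\varphi(t)+b(t)\cdot x$. Then almost surely $$\Phi_X(U)=\Phi_X^{**}(U)\quad\text{and}\quad U\in\partial\Phi_X^*(Y),\ \text{equivalently}\ Y\in\partial\Phi_X^{**}(U).$$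
   Context: For fixed $x$, $\Phi_x^*(y):=\sup_{t\in[0,1]^d}\{t\cdot y-\Phi_x(t)\}$ is the Legendre transform of $\Phi_x$ (as a function on $[0,1]^d$), $\Phi_x^{**}$ is the Legendre transform of $\Phi_x^*$ restricted to $[0,1]^d$ (the convex lower semicontinuous envelope of $\Phi_x$), and $\partial$ denotes the convex subdifferential. *)

theory Defs
  imports "HOL-Probability.Probability"
begin

definition nonatomic :: "'a measure \<Rightarrow> bool" where
  "nonatomic M \<longleftrightarrow> (\<forall>A\<in>sets M. 0 < emeasure M A \<longrightarrow>
     (\<exists>B\<in>sets M. B \<subseteq> A \<and> 0 < emeasure M B \<and> emeasure M B < emeasure M A))"

definition measure_support :: "'b::metric_space measure \<Rightarrow> 'b set" where
  "measure_support \<nu> = {z. \<forall>e>0. 0 < emeasure \<nu> (ball z e)}"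

definition unif_cube :: "(real^'d) measure" where
  "unif_cube = uniform_measure lborel (cbox 0 One)"

definition cond_exp_zero :: "'a measure \<Rightarrow> ('a \<Rightarrow> real^'n) \<Rightarrow> ('a \<Rightarrow> real^'d) \<Rightarrow> bool" where
  "cond_exp_zero M X V \<longleftrightarrow> (\<forall>i. AE \<omega> in M.
      real_cond_exp M (vimage_algebra (space M) V borel) (\<lambda>\<omega>. X \<omega> $ i) \<omega> = 0)"

definition primal_feasible :: "'a measure \<Rightarrow> ('a \<Rightarrow> real^'n) \<Rightarrow> ('a \<Rightarrow> real^'d) \<Rightarrow> bool" where
  "primal_feasible M X V \<longleftrightarrow> V \<in> borel_measurable M \<and> distr M borel V = unif_cube
      \<and> cond_exp_zero M X V"

definition dual_feasible :: "'a measure \<Rightarrow> ('a \<Rightarrow> real^'n) \<Rightarrow> ('a \<Rightarrow> real^'d)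
   \<Rightarrow> ((real^'n) \<times> (real^'d) \<Rightarrow> real) \<Rightarrow> (real^'d \<Rightarrow> real) \<Rightarrow> (real^'d \<Rightarrow> real^'n) \<Rightarrow> bool" where
  "dual_feasible M X Y \<psi> \<phi> b \<longleftrightarrow>
     integrable (distr M borel (\<lambda>\<omega>. (X \<omega>, Y \<omega>))) \<psi> \<and> integrable unif_cube \<phi> \<and> integrable unif_cube b \<and>
     (\<forall>x y t. (x, y) \<in> measure_support (distr M borel (\<lambda>\<omega>. (X \<omega>, Y \<omega>))) \<longrightarrow> t \<in> cbox 0 One \<longrightarrow>
        t \<bullet> y \<le> \<psi> (x, y) + \<phi> t + b t \<bullet> x)"

definition dual_value :: "'a measure \<Rightarrow> ('a \<Rightarrow> real^'n) \<Rightarrow> ('a \<Rightarrow> real^'d)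
   \<Rightarrow> ((real^'n) \<times> (real^'d) \<Rightarrow> real) \<Rightarrow> (real^'d \<Rightarrow> real) \<Rightarrow> real" where
  "dual_value M X Y \<psi> \<phi> = (\<integral>\<omega>. \<psi> (X \<omega>, Y \<omega>) \<partial>M) + (\<integral>t. \<phi> t \<partial>unif_cube)"

definition primal_value :: "'a measure \<Rightarrow> ('a \<Rightarrow> real^'d) \<Rightarrow> ('a \<Rightarrow> real^'d) \<Rightarrow> real" where
  "primal_value M Y V = (\<integral>\<omega>. V \<omega> \<bullet> Y \<omega> \<partial>M)"

definition Phi :: "(real^'d \<Rightarrow> real) \<Rightarrow> (real^'d \<Rightarrow> real^'n) \<Rightarrow> real^'n \<Rightarrow> real^'d \<Rightarrow> real" where
  "Phi \<phi> b x t = \<phi> t + b t \<bullet> x"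

definition legendre_cube :: "(real^'d \<Rightarrow> real) \<Rightarrow> real^'d \<Rightarrow> ereal" where
  "legendre_cube f y = (SUP t\<in>cbox 0 One. ereal (t \<bullet> y - f t))"

(* Legendre transform of g, to be read on [0,1]^d *)
definition legendre :: "(real^'d \<Rightarrow> ereal) \<Rightarrow> real^'d \<Rightarrow> ereal" where
  "legendre g t = (SUP y\<in>UNIV. ereal (t \<bullet> y) - g y)"

(* convex subdifferential of f at x, f regarded as +infinity outside S *)
definition subdiff_on :: "(real^'d) set \<Rightarrow> (real^'d \<Rightarrow> ereal) \<Rightarrow> real^'d \<Rightarrow> (real^'d) set" where
  "subdiff_on S f x = {p. x \<in> S \<and> (\<forall>z\<in>S. f x + ereal (p \<bullet> (z - x)) \<le> f z)}"

end

theory Submission imports Defs begin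

text \<open>Complementary slackness. Dual feasibility says that the slack
  \<open>\<psi>(X,Y) + \<Phi>\<^sub>X(U) - U\<cdot>Y\<close> is almost surely nonnegative. Its expectation is the duality gap:
  \<open>\<phi>(U)\<close> integrates to \<open>\<integral>\<phi> d\<mu>\<close> because \<open>U\<close> is uniform, and \<open>b(U)\<cdot>X\<close> integrates to \<open>0\<close>
  because \<open>\<bbbE>(X | U) = 0\<close>. With no gap the slack vanishes almost surely, i.e. the affine
  function \<open>t \<mapsto> t\<cdot>Y - \<psi>(X,Y)\<close> minorizes \<open>\<Phi>\<^sub>X\<close> on the cube and touches it at \<open>U\<close>; the three
  conclusions are the usual Fenchel equality conditions at such a touching point.\<close>

definition dual_slack ::
    "((real^'n) \<times> (real^'d) \<Rightarrow> real) \<Rightarrow> (real^'d \<Rightarrow> real) \<Rightarrow> (real^'d \<Rightarrow> real^'n)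
      \<Rightarrow> real^'n \<Rightarrow> real^'d \<Rightarrow> real^'d \<Rightarrow> real" where
  "dual_slack \<psi> \<phi> b x y t = \<psi> (x, y) + Phi \<phi> b x t - t \<bullet> y"

lemma legendre_cube_eq_if_touching:
  fixes F :: "real^'d \<Rightarrow> real"
  assumes u: "u \<in> cbox 0 One" and le: "\<And>t. t \<in> cbox 0 One \<Longrightarrow> t \<bullet> y \<le> p + F t"
    and eq: "p + F u = u \<bullet> y"
  shows "legendre_cube F y = ereal p"
  unfolding legendre_cube_def
proof (rule antisym)
  show "(SUP t\<in>cbox 0 One. ereal (t \<bullet> y - F t)) \<le> ereal p"
    using le by (intro SUP_least) (simp add: algebra_simps)
  show "ereal p \<le> (SUP t\<in>cbox 0 One. ereal (t \<bullet> y - F t))"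
    using eq u by (intro SUP_upper2[of u]) auto
qed

lemma legendre_cube_ge:
  fixes F :: "real^'d \<Rightarrow> real"
  assumes "u \<in> cbox 0 One"
  shows "ereal (u \<bullet> z - F u) \<le> legendre_cube F z"
  unfolding legendre_cube_def using assms by (intro SUP_upper) auto

lemma legendre_legendre_cube_eq_if_touching:
  fixes F :: "real^'d \<Rightarrow> real"
  assumes u: "u \<in> cbox 0 One" and le: "\<And>t. t \<in> cbox 0 One \<Longrightarrow> t \<bullet> y \<le> p + F t"
    and eq: "p + F u = u \<bullet> y"
  shows "legendre (legendre_cube F) u = ereal (F u)"
  unfolding legendre_def
proof (rule antisym)
  show "(SUP z\<in>UNIV. ereal (u \<bullet> z) - legendre_cube F z) \<le> ereal (F u)"
  proof (intro SUP_least)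
    fix z
    have "ereal (u \<bullet> z - F u) \<le> legendre_cube F z"
      using u by (rule legendre_cube_ge)
    then show "ereal (u \<bullet> z) - legendre_cube F z \<le> ereal (F u)"
      by (cases "legendre_cube F z") auto
  qed
  show "ereal (F u) \<le> (SUP z\<in>UNIV. ereal (u \<bullet> z) - legendre_cube F z)"
    using eq legendre_cube_eq_if_touching[OF assms] by (intro SUP_upper2[of y]) auto
qed

lemma fenchel_equality_if_touching:
  fixes F :: "real^'d \<Rightarrow> real"
  assumes u: "u \<in> cbox 0 One" and le: "\<And>t. t \<in> cbox 0 One \<Longrightarrow> t \<bullet> y \<le> p + F t"
    and eq: "p + F u = u \<bullet> y"
  shows "ereal (F u) = legendre (legendre_cube F) u
     \<and> u \<in> subdiff_on UNIV (legendre_cube F) y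
     \<and> y \<in> subdiff_on (cbox 0 One) (legendre (legendre_cube F)) u"
proof (intro conjI)
  note conj = legendre_cube_eq_if_touching[OF assms]
  note biconj = legendre_legendre_cube_eq_if_touching[OF assms]
  show "ereal (F u) = legendre (legendre_cube F) u"
    using biconj by simp
  show "u \<in> subdiff_on UNIV (legendre_cube F) y"
    unfolding subdiff_on_def
  proof safe
    fix z
    have "legendre_cube F y + ereal (u \<bullet> (z - y)) = ereal (u \<bullet> z - F u)"
      using conj eq by (simp add: inner_diff_right)
    then show "legendre_cube F y + ereal (u \<bullet> (z - y)) \<le> legendre_cube F z"
      using legendre_cube_ge[OF u] by simp
  qed simp
  show "y \<in> subdiff_on (cbox 0 One) (legendre (legendre_cube F)) u"
    unfolding subdiff_on_def
  proof safe
    fix z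
    have "ereal (z \<bullet> y - p) \<le> legendre (legendre_cube F) z"
      unfolding legendre_def using conj by (intro SUP_upper2[of y]) auto
    moreover have "legendre (legendre_cube F) u + ereal (y \<bullet> (z - u)) = ereal (z \<bullet> y - p)"
      using biconj eq by (simp add: inner_diff_right inner_commute)
    ultimately show "legendre (legendre_cube F) u + ereal (y \<bullet> (z - u))
        \<le> legendre (legendre_cube F) z"
      by simp
  qed (use u in simp)
qed

lemma AE_in_measure_support:
  fixes \<nu> :: "'b::{metric_space, second_countable_topology} measure"
  assumes sets_\<nu>: "sets \<nu> = sets borel"
  shows "AE z in \<nu>. z \<in> measure_support \<nu>"
proof -
  define F where "F = {ball z e | z e. e > 0 \<and> emeasure \<nu> (ball z e) = 0}"
  have "\<And>S. S \<in> F \<Longrightarrow> open S" unfolding F_def by auto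
  then obtain F' where F': "F' \<subseteq> F" "countable F'" "\<Union>F' = \<Union>F" by (rule Lindelof)
  have "S \<in> null_sets \<nu>" if "S \<in> F" for S
  proof -
    from that obtain z e where "S = ball z e" "emeasure \<nu> (ball z e) = 0"
      unfolding F_def by blast
    then show ?thesis
      using sets_\<nu> by (simp add: null_sets_def)
  qed
  then have null: "\<Union>F' \<in> null_sets \<nu>"
    using null_sets_UN'[of F' "\<lambda>S. S", OF F'(2)] F'(1) by auto
  show ?thesis
  proof (rule AE_I'[OF null])
    show "{z \<in> space \<nu>. z \<notin> measure_support \<nu>} \<subseteq> \<Union>F'"
    proof
      fix z assume "z \<in> {z \<in> space \<nu>. z \<notin> measure_support \<nu>}"
      then obtain e where "e > 0" "\<not> 0 < emeasure \<nu> (ball z e)"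
        unfolding measure_support_def by auto
      then have "ball z e \<in> F" "z \<in> ball z e" unfolding F_def by (auto simp: not_less)
      then show "z \<in> \<Union>F'" using F'(3) by blast
    qed
  qed
qed

lemma AE_in_cube_if_distr_unif_cube:
  assumes "U \<in> borel_measurable M" and "distr M borel U = unif_cube"
  shows "AE \<omega> in M. U \<omega> \<in> cbox 0 One"
proof -
  have "AE t in unif_cube. t \<in> cbox 0 One"
    unfolding unif_cube_def by (rule AE_uniform_measureI) auto
  then have "AE t in distr M borel U. t \<in> cbox 0 One"
    by (simp only: assms(2))
  then show ?thesis
    by (rule AE_distrD[OF assms(1)])
qed

lemma integral_mult_component_cond_exp_zero:
  fixes X :: "'a \<Rightarrow> real^'n" and U :: "'a \<Rightarrow> real^'d" and f :: "real^'d \<Rightarrow> real"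
  assumes "prob_space M" and U: "U \<in> borel_measurable M"
    and X: "integrable M X" and X_bounded: "AE \<omega> in M. norm (X \<omega>) \<le> C"
    and cond_exp: "cond_exp_zero M X U"
    and f: "f \<in> borel_measurable borel" and f_int: "integrable M (\<lambda>\<omega>. f (U \<omega>))"
  shows "integrable M (\<lambda>\<omega>. f (U \<omega>) * X \<omega> $ i)"
    and "(\<integral>\<omega>. f (U \<omega>) * X \<omega> $ i \<partial>M) = 0"
proof -
  interpret prob_space M by fact
  define F where "F = vimage_algebra (space M) U borel"
  interpret finite_measure_subalgebra M F
    by unfold_locales (simp add: subalgebra_def F_def sets_image_in_sets[OF refl U])
  have "U \<in> measurable F borel"
    unfolding F_def by (rule measurable_vimage_algebra1) simp
  then have fU_F: "(\<lambda>\<omega>. f (U \<omega>)) \<in> borel_measurable F"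
    using f by measurable
  have Xi: "(\<lambda>\<omega>. X \<omega> $ i) \<in> borel_measurable M"
    using integrable_bounded_linear[OF bounded_linear_vec_nth X] by blast
  show int: "integrable M (\<lambda>\<omega>. f (U \<omega>) * X \<omega> $ i)"
  proof (rule Bochner_Integration.integrable_bound[where f="\<lambda>\<omega>. C * f (U \<omega>)"])
    show "integrable M (\<lambda>\<omega>. C * f (U \<omega>))" using f_int by simp
    show "(\<lambda>\<omega>. f (U \<omega>) * X \<omega> $ i) \<in> borel_measurable M"
      using borel_measurable_integrable[OF f_int] Xi by simp
    show "AE \<omega> in M. norm (f (U \<omega>) * X \<omega> $ i) \<le> norm (C * f (U \<omega>))"
      using X_bounded
    proof eventually_elim
      case (elim \<omega>)
      then have "\<bar>X \<omega> $ i\<bar> \<le> \<bar>C\<bar>"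
        using component_le_norm_cart[of "X \<omega>" i] by linarith
      then have "\<bar>f (U \<omega>)\<bar> * \<bar>X \<omega> $ i\<bar> \<le> \<bar>f (U \<omega>)\<bar> * \<bar>C\<bar>"
        by (intro mult_left_mono) auto
      then show ?case
        by (simp add: abs_mult mult.commute)
    qed
  qed
  have "(\<integral>\<omega>. f (U \<omega>) * X \<omega> $ i \<partial>M)
      = (\<integral>\<omega>. f (U \<omega>) * real_cond_exp M F (\<lambda>\<omega>. X \<omega> $ i) \<omega> \<partial>M)"
    using real_cond_exp_intg(2)[OF int fU_F Xi] by simp
  also have "\<dots> = (\<integral>\<omega>. 0 \<partial>M)"
  proof (rule integral_cong_AE)
    show "(\<lambda>\<omega>. f (U \<omega>) * real_cond_exp M F (\<lambda>\<omega>. X \<omega> $ i) \<omega>) \<in> borel_measurable M"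
      using real_cond_exp_intg(1)[OF int fU_F Xi] by (rule borel_measurable_integrable)
    have "AE \<omega> in M. real_cond_exp M F (\<lambda>\<omega>. X \<omega> $ i) \<omega> = 0"
      using cond_exp unfolding cond_exp_zero_def F_def by blast
    then show "AE \<omega> in M. f (U \<omega>) * real_cond_exp M F (\<lambda>\<omega>. X \<omega> $ i) \<omega> = 0"
      by eventually_elim simp
  qed simp
  finally show "(\<integral>\<omega>. f (U \<omega>) * X \<omega> $ i \<partial>M) = 0"
    by simp
qed

lemma integral_inner_cond_exp_zero:
  fixes X :: "'a \<Rightarrow> real^'n" and U :: "'a \<Rightarrow> real^'d" and b :: "real^'d \<Rightarrow> real^'n"
  assumes "prob_space M" and "U \<in> borel_measurable M"
    and "integrable M X" and "AE \<omega> in M. norm (X \<omega>) \<le> C"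
    and "cond_exp_zero M X U"
    and b: "b \<in> borel_measurable borel" and b_int: "integrable M (\<lambda>\<omega>. b (U \<omega>))"
  shows "integrable M (\<lambda>\<omega>. b (U \<omega>) \<bullet> X \<omega>)"
    and "(\<integral>\<omega>. b (U \<omega>) \<bullet> X \<omega> \<partial>M) = 0"
proof -
  have "(\<lambda>t. b t $ i) \<in> borel_measurable borel" for i
    by (rule measurable_compose[OF b borel_measurable_continuous_onI]) (intro continuous_intros)
  moreover have "integrable M (\<lambda>\<omega>. b (U \<omega>) $ i)" for i
    using integrable_bounded_linear[OF bounded_linear_vec_nth b_int] .
  ultimately have component:
      "integrable M (\<lambda>\<omega>. b (U \<omega>) $ i * X \<omega> $ i)"
      "(\<integral>\<omega>. b (U \<omega>) $ i * X \<omega> $ i \<partial>M) = 0" for i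
    using integral_mult_component_cond_exp_zero[OF assms(1-5)] by blast+
  show "integrable M (\<lambda>\<omega>. b (U \<omega>) \<bullet> X \<omega>)"
    unfolding inner_vec_def using component(1) by simp
  show "(\<integral>\<omega>. b (U \<omega>) \<bullet> X \<omega> \<partial>M) = 0"
    unfolding inner_vec_def using component by (subst Bochner_Integration.integral_sum) auto
qed

lemma AE_dual_slack_nonneg:
  assumes X: "X \<in> borel_measurable M" and Y: "Y \<in> borel_measurable M"
    and "dual_feasible M X Y \<psi> \<phi> b"
  shows "AE \<omega> in M. \<forall>t\<in>cbox 0 One. 0 \<le> dual_slack \<psi> \<phi> b (X \<omega>) (Y \<omega>) t"
proof -
  have XY: "(\<lambda>\<omega>. (X \<omega>, Y \<omega>)) \<in> borel_measurable M"
    using X Y by measurable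
  have "AE \<omega> in M. (X \<omega>, Y \<omega>) \<in> measure_support (distr M borel (\<lambda>\<omega>. (X \<omega>, Y \<omega>)))"
    by (rule AE_distrD[OF XY AE_in_measure_support]) simp
  then show ?thesis
  proof (rule eventually_mono)
    fix \<omega> assume "(X \<omega>, Y \<omega>) \<in> measure_support (distr M borel (\<lambda>\<omega>. (X \<omega>, Y \<omega>)))"
    with assms(3) show "\<forall>t\<in>cbox 0 One. 0 \<le> dual_slack \<psi> \<phi> b (X \<omega>) (Y \<omega>) t"
      unfolding dual_feasible_def dual_slack_def Phi_def by (auto simp: algebra_simps)
  qed
qed

lemma integrable_inner_if_bounded:
  fixes U Y :: "'a \<Rightarrow> 'b::euclidean_space"
  assumes "finite_measure M" and U: "U \<in> borel_measurable M" and Y: "Y \<in> borel_measurable M"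
    and "AE \<omega> in M. norm (U \<omega>) \<le> CU" and "AE \<omega> in M. norm (Y \<omega>) \<le> CY"
  shows "integrable M (\<lambda>\<omega>. U \<omega> \<bullet> Y \<omega>)"
proof -
  interpret finite_measure M by fact
  show ?thesis
  proof (rule integrable_const_bound[where B="CU * CY"])
    show "AE \<omega> in M. norm (U \<omega> \<bullet> Y \<omega>) \<le> CU * CY"
      using assms(4,5)
    proof eventually_elim
      case (elim \<omega>)
      have "norm (U \<omega> \<bullet> Y \<omega>) \<le> norm (U \<omega>) * norm (Y \<omega>)"
        by (simp add: Cauchy_Schwarz_ineq2)
      also have "\<dots> \<le> CU * CY"
        using elim norm_ge_zero[of "U \<omega>"] norm_ge_zero[of "Y \<omega>"] by (intro mult_mono; linarith)
      finally show ?case .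
    qed
  qed (use U Y in measurable)
qed

lemma dual_slack_integral:
  fixes X :: "'a \<Rightarrow> real^'n" and Y U :: "'a \<Rightarrow> real^'d"
  assumes "prob_space M" and X: "X \<in> borel_measurable M" and "integrable M X"
    and "AE \<omega> in M. norm (X \<omega>) \<le> CX"
    and Y: "Y \<in> borel_measurable M" and Y_bounded: "AE \<omega> in M. norm (Y \<omega>) \<le> CY"
    and primal: "primal_feasible M X U" and dual: "dual_feasible M X Y \<psi> \<phi> b"
  shows "integrable M (\<lambda>\<omega>. dual_slack \<psi> \<phi> b (X \<omega>) (Y \<omega>) (U \<omega>))"
    and "(\<integral>\<omega>. dual_slack \<psi> \<phi> b (X \<omega>) (Y \<omega>) (U \<omega>) \<partial>M)
           = dual_value M X Y \<psi> \<phi> - primal_value M Y U"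
proof -
  interpret prob_space M by fact
  from primal have U: "U \<in> borel_measurable M" and U_law: "distr M borel U = unif_cube"
    and cond_exp: "cond_exp_zero M X U"
    unfolding primal_feasible_def by auto
  have sets_unif_cube: "sets unif_cube = sets borel"
    by (simp add: unif_cube_def)
  have XY: "(\<lambda>\<omega>. (X \<omega>, Y \<omega>)) \<in> borel_measurable M"
    using X Y by measurable
  have \<psi>_int: "integrable M (\<lambda>\<omega>. \<psi> (X \<omega>, Y \<omega>))"
    using dual integrable_distr[OF XY, of \<psi>] unfolding dual_feasible_def by simp
  have \<phi>: "\<phi> \<in> borel_measurable borel" and \<phi>_int: "integrable M (\<lambda>\<omega>. \<phi> (U \<omega>))"
    using dual U_law integrable_distr[OF U, of \<phi>] borel_measurable_integrable[of unif_cube \<phi>]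
    unfolding dual_feasible_def measurable_cong_sets[OF sets_unif_cube refl] by auto
  have b: "b \<in> borel_measurable borel" and b_int: "integrable M (\<lambda>\<omega>. b (U \<omega>))"
    using dual U_law integrable_distr[OF U, of b] borel_measurable_integrable[of unif_cube b]
    unfolding dual_feasible_def measurable_cong_sets[OF sets_unif_cube refl] by auto
  note bX = integral_inner_cond_exp_zero[OF \<open>prob_space M\<close> U \<open>integrable M X\<close>
      \<open>AE \<omega> in M. norm (X \<omega>) \<le> CX\<close> cond_exp b b_int]
  obtain CU where "\<And>t. t \<in> cbox (0::real^'d) One \<Longrightarrow> norm t \<le> CU"
    using bounded_cbox[of "0::real^'d" One] unfolding bounded_iff by blast
  then have "AE \<omega> in M. norm (U \<omega>) \<le> CU"
    using AE_in_cube_if_distr_unif_cube[OF U U_law] by (auto elim: eventually_mono)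
  then have UY_int: "integrable M (\<lambda>\<omega>. U \<omega> \<bullet> Y \<omega>)"
    by (rule integrable_inner_if_bounded[OF finite_measure_axioms U Y _ Y_bounded])
  show "integrable M (\<lambda>\<omega>. dual_slack \<psi> \<phi> b (X \<omega>) (Y \<omega>) (U \<omega>))"
    unfolding dual_slack_def Phi_def using \<psi>_int \<phi>_int bX(1) UY_int by auto
  have "(\<integral>\<omega>. dual_slack \<psi> \<phi> b (X \<omega>) (Y \<omega>) (U \<omega>) \<partial>M)
      = (\<integral>\<omega>. \<psi> (X \<omega>, Y \<omega>) \<partial>M) + (\<integral>\<omega>. \<phi> (U \<omega>) \<partial>M)
        + (\<integral>\<omega>. b (U \<omega>) \<bullet> X \<omega> \<partial>M) - (\<integral>\<omega>. U \<omega> \<bullet> Y \<omega> \<partial>M)"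
    unfolding dual_slack_def Phi_def using \<psi>_int \<phi>_int bX(1) UY_int by simp
  also have "(\<integral>\<omega>. \<phi> (U \<omega>) \<partial>M) = (\<integral>t. \<phi> t \<partial>unif_cube)"
    using integral_distr[OF U \<phi>] U_law by simp
  finally show "(\<integral>\<omega>. dual_slack \<psi> \<phi> b (X \<omega>) (Y \<omega>) (U \<omega>) \<partial>M)
      = dual_value M X Y \<psi> \<phi> - primal_value M Y U"
    unfolding dual_value_def primal_value_def bX(2) by simp
qed

theorem mainTheorem4:
  fixes M :: "'a measure"
    and X :: "'a \<Rightarrow> real^'n" and Y :: "'a \<Rightarrow> real^'d" and U :: "'a \<Rightarrow> real^'d"
    and \<psi> :: "(real^'n) \<times> (real^'d) \<Rightarrow> real" and \<phi> :: "real^'d \<Rightarrow> real" and b :: "real^'d \<Rightarrow> real^'n"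
  assumes "prob_space M" and "nonatomic M"
    and "X \<in> borel_measurable M" and "\<exists>C. AE \<omega> in M. norm (X \<omega>) \<le> C"
    and "integrable M X" and "(\<integral>\<omega>. X \<omega> \<partial>M) = 0"
    and "Y \<in> borel_measurable M" and "\<exists>C. AE \<omega> in M. norm (Y \<omega>) \<le> C"
    and U_opt: "primal_feasible M X U"
      "\<And>V. primal_feasible M X V \<Longrightarrow> primal_value M Y V \<le> primal_value M Y U"
    and D_opt: "dual_feasible M X Y \<psi> \<phi> b"
      "\<And>\<psi>' \<phi>' b'. dual_feasible M X Y \<psi>' \<phi>' b' \<Longrightarrow> dual_value M X Y \<psi> \<phi> \<le> dual_value M X Y \<psi>' \<phi>'"
    and no_gap: "primal_value M Y U = dual_value M X Y \<psi> \<phi>"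
  shows "AE \<omega> in M.
     ereal (Phi \<phi> b (X \<omega>) (U \<omega>)) = legendre (legendre_cube (Phi \<phi> b (X \<omega>))) (U \<omega>)
     \<and> U \<omega> \<in> subdiff_on UNIV (legendre_cube (Phi \<phi> b (X \<omega>))) (Y \<omega>)
     \<and> Y \<omega> \<in> subdiff_on (cbox 0 One) (legendre (legendre_cube (Phi \<phi> b (X \<omega>)))) (U \<omega>)"
proof -
  let ?slack = "\<lambda>\<omega>. dual_slack \<psi> \<phi> b (X \<omega>) (Y \<omega>) (U \<omega>)"
  obtain CX CY where "AE \<omega> in M. norm (X \<omega>) \<le> CX" "AE \<omega> in M. norm (Y \<omega>) \<le> CY"
    using assms(4,8) by blast
  note slack_integral = dual_slack_integral[OF assms(1,3,5) this(1) assms(7) this(2) U_opt(1) D_opt(1)]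
  have U_cube: "AE \<omega> in M. U \<omega> \<in> cbox 0 One"
    using U_opt(1) AE_in_cube_if_distr_unif_cube unfolding primal_feasible_def by blast
  note slack_nonneg = AE_dual_slack_nonneg[OF assms(3,7) D_opt(1)]
  have "AE \<omega> in M. 0 \<le> ?slack \<omega>"
    using slack_nonneg U_cube by eventually_elim blast
  then have "AE \<omega> in M. ?slack \<omega> = 0"
    using integral_nonneg_eq_0_iff_AE[OF slack_integral(1)] slack_integral(2) no_gap by simp
  with slack_nonneg U_cube show ?thesis
  proof eventually_elim
    case (elim \<omega>)
    show ?case
    proof (rule fenchel_equality_if_touching[where p="\<psi> (X \<omega>, Y \<omega>)"])
      show "U \<omega> \<in> cbox 0 One" by fact
      show "t \<bullet> Y \<omega> \<le> \<psi> (X \<omega>, Y \<omega>) + Phi \<phi> b (X \<omega>) t" if "t \<in> cbox 0 One" for t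
        using elim(1) that unfolding dual_slack_def by auto
      show "\<psi> (X \<omega>, Y \<omega>) + Phi \<phi> b (X \<omega>) (U \<omega>) = U \<omega> \<bullet> Y \<omega>"
        using elim(3) unfolding dual_slack_def by simp
    qed
  qed
qed

end
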